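(* If $\delta=x^{\mathbf d}f(\theta)$ is a homogeneous differential operator on $R$ of degree $\mathbf d$ with $-\mathbf d$ in the interior of $\sigma^\vee$, then $\delta$ fixes at most one nonzero monomial ideal of $R$.
   Context: Let $\sigma\subseteq\mathbb R^d$ be a full-dimensional, strongly convex rational polyhedral cone, $S=\sigma^\vee\cap\mathbb Z^d$, $R=\mathbb C[S]$ with monomial basis $x^{\mathbf a}$, $\mathbf a\in S$. Let $h_1,\dots,h_n$ be the primitive support functions of the facets of $\sigma^\vee$. $(g,m)!=\prod_{j=0}^m(g-j)$ for $m\ge0$, $=1$ for $m<0$; $H_{\mathbf d}=\prod_i(h_i,h_i(-\mathbf d)-1)!$. For $f\in\mathbb C[t_1,\dots,t_d]$ divisible by $H_{\mathbf d}$, $\delta=x^{\mathbf d}f(\theta)$ is the $\mathbb C$-linear map $R\to R$ with $\delta(x^{\mathbf a})=f(\mathbf a)x^{\mathbf a+\mathbf d}$. An ideal $I$ is $\delta$-fixed if $\delta(I)=I$. *)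

theory Defs
  imports "HOL-Analysis.Analysis" "HOL-Library.Poly_Mapping"
begin

definition rvec :: "int^'n \<Rightarrow> real^'n" where
  "rvec a = (\<chi> i. of_int (a $ i))"

definition rat_poly_cone :: "(real^'n) set \<Rightarrow> bool" where
  "rat_poly_cone \<sigma> \<longleftrightarrow> (\<exists>V :: (int^'n) set. finite V \<and>
     \<sigma> = {\<Sum>v\<in>V. c v *\<^sub>R rvec v | c. \<forall>v\<in>V. c v \<ge> 0})"

definition strongly_convex :: "(real^'n) set \<Rightarrow> bool" where
  "strongly_convex \<sigma> \<longleftrightarrow> \<sigma> \<inter> uminus ` \<sigma> = {0}"

definition dualc :: "(real^'n) set \<Rightarrow> (real^'n) set" where
  "dualc \<sigma> = {u. \<forall>v\<in>\<sigma>. 0 \<le> u \<bullet> v}"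

definition sgrp :: "(real^'n) set \<Rightarrow> (int^'n) set" where
  "sgrp \<sigma> = {a. rvec a \<in> dualc \<sigma>}"

definition primitive :: "int^'n \<Rightarrow> bool" where
  "primitive h \<longleftrightarrow> (\<forall>(k::int) g. h = k *s g \<longrightarrow> k = 1 \<or> k = -1)"

definition is_prim_supp :: "(real^'n) set \<Rightarrow> (real^'n) set \<Rightarrow> int^'n \<Rightarrow> bool" where
  "is_prim_supp \<sigma> F h \<longleftrightarrow> primitive h \<and> (\<forall>u\<in>dualc \<sigma>. 0 \<le> rvec h \<bullet> u)
      \<and> F = {u\<in>dualc \<sigma>. rvec h \<bullet> u = 0}"

definition prim_supp :: "(real^'n) set \<Rightarrow> (real^'n) set \<Rightarrow> int^'n" where
  "prim_supp \<sigma> F = (THE h. is_prim_supp \<sigma> F h)"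

definition ipair :: "int^'n \<Rightarrow> int^'n \<Rightarrow> int" where
  "ipair h a = (\<Sum>i\<in>UNIV. h $ i * a $ i)"

type_synonym 'n cpoly = "('n \<Rightarrow>\<^sub>0 nat) \<Rightarrow>\<^sub>0 complex"

definition pconst :: "complex \<Rightarrow> 'n cpoly" where
  "pconst c = Poly_Mapping.single 0 c"

definition pvar :: "'n \<Rightarrow> 'n cpoly" where
  "pvar k = Poly_Mapping.single (Poly_Mapping.single k 1) 1"

definition plin :: "int^'n \<Rightarrow> 'n::finite cpoly" where
  "plin h = (\<Sum>k\<in>UNIV. pconst (of_int (h $ k)) * pvar k)"

definition pfall :: "'n cpoly \<Rightarrow> int \<Rightarrow> 'n cpoly" where
  "pfall g m = (if m < 0 then 1 else (\<Prod>j\<in>{0..nat m}. g - pconst (of_nat j)))"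

definition Hd :: "(real^'n) set \<Rightarrow> int^'n \<Rightarrow> 'n::finite cpoly" where
  "Hd \<sigma> d = (\<Prod>F\<in>{F. F facet_of dualc \<sigma>}.
      pfall (plin (prim_supp \<sigma> F)) (ipair (prim_supp \<sigma> F) (-d) - 1))"

definition peval :: "'n cpoly \<Rightarrow> ('n \<Rightarrow> complex) \<Rightarrow> complex" where
  "peval f t = (\<Sum>m\<in>Poly_Mapping.keys f. Poly_Mapping.lookup f m * (\<Prod>i\<in>Poly_Mapping.keys m. t i ^ Poly_Mapping.lookup m i))"

type_synonym 'n gring = "(int^'n) \<Rightarrow>\<^sub>0 complex"

definition Rng :: "(real^'n) set \<Rightarrow> 'n gring set" where
  "Rng \<sigma> = {p. Poly_Mapping.keys p \<subseteq> sgrp \<sigma>}"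

definition xmon :: "int^'n \<Rightarrow> 'n gring" where
  "xmon a = Poly_Mapping.single a 1"

definition is_ideal :: "(real^'n) set \<Rightarrow> 'n gring set \<Rightarrow> bool" where
  "is_ideal \<sigma> I \<longleftrightarrow> I \<subseteq> Rng \<sigma> \<and> 0 \<in> I \<and> (\<forall>x\<in>I. \<forall>y\<in>I. x + y \<in> I \<and> x - y \<in> I)
      \<and> (\<forall>r\<in>Rng \<sigma>. \<forall>x\<in>I. r * x \<in> I)"

definition gen_ideal :: "(real^'n) set \<Rightarrow> 'n gring set \<Rightarrow> 'n gring set" where
  "gen_ideal \<sigma> G = \<Inter>{J. is_ideal \<sigma> J \<and> G \<subseteq> J}"

definition monomial_ideal :: "(real^'n) set \<Rightarrow> 'n gring set \<Rightarrow> bool" where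
  "monomial_ideal \<sigma> I \<longleftrightarrow> (\<exists>A \<subseteq> sgrp \<sigma>. I = gen_ideal \<sigma> (xmon ` A))"

text \<open>delta = x^d f(theta): the linear map with x^a \<mapsto> f(a) x^(a+d)\<close>
definition delta :: "int^'n \<Rightarrow> 'n cpoly \<Rightarrow> 'n gring \<Rightarrow> 'n gring" where
  "delta d f p = (\<Sum>a\<in>Poly_Mapping.keys p. Poly_Mapping.single (a + d)
      (Poly_Mapping.lookup p a * peval f (\<lambda>i. of_int (a $ i))))"

end

theory Submission
  imports Defs
begin

text \<open>
  A monomial ideal is the span of the monomials over a semigroup ideal U \<subseteq> S. If \<delta> maps the
  span of V onto itself, every a \<in> V must be hit from a - d, so a - d \<in> V and f(a - d) \<noteq> 0;
  hence the whole ray a - k d (k \<ge> 1) lies in V and avoids the zeros of f. As -d is interior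
  to the dual cone, (a - c) - k d \<in> S for large k, so for c in another nonempty semigroup ideal U
  the point a - k d lies in U, and since \<delta> maps the span of U into itself the steps +d along the
  ray carry it back to a \<in> U.
\<close>

lemma rvec_add: "rvec (a + b) = rvec a + rvec b"
  by (simp add: rvec_def vec_eq_iff)

lemma rvec_zero: "rvec 0 = 0"
  by (simp add: rvec_def vec_eq_iff)

lemma dualc_add: "u \<in> dualc \<sigma> \<Longrightarrow> v \<in> dualc \<sigma> \<Longrightarrow> u + v \<in> dualc \<sigma>"
  by (auto simp: dualc_def inner_add_left)

lemma dualc_scaleR: "u \<in> dualc \<sigma> \<Longrightarrow> 0 \<le> t \<Longrightarrow> t *\<^sub>R u \<in> dualc \<sigma>"
  by (auto simp: dualc_def)

lemma sgrp_add: "a \<in> sgrp \<sigma> \<Longrightarrow> b \<in> sgrp \<sigma> \<Longrightarrow> a + b \<in> sgrp \<sigma>"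
  by (simp add: sgrp_def rvec_add dualc_add)

lemma sgrp_zero: "0 \<in> sgrp \<sigma>"
  by (simp add: sgrp_def rvec_zero dualc_def)

lemma sgrp_add_multiple_of_interior:
  assumes "rvec e \<in> interior (dualc \<sigma>)"
  shows "\<exists>k::nat. a + of_nat k *s e \<in> sgrp \<sigma>"
proof -
  obtain r where r: "r > 0" "ball (rvec e) r \<subseteq> dualc \<sigma>"
    using assms by (meson mem_interior)
  obtain k :: nat where k: "norm (rvec a) / r < real k"
    using reals_Archimedean2 by blast
  have k_pos: "real k > 0"
    using k r by (smt (verit) divide_nonneg_pos norm_ge_zero)
  have "dist (rvec e) (rvec e + (1 / real k) *\<^sub>R rvec a) = norm (rvec a) / real k"
    using k_pos by (simp add: dist_norm)
  also have "\<dots> < r"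
    using k k_pos r by (simp add: field_simps)
  finally have "rvec e + (1 / real k) *\<^sub>R rvec a \<in> dualc \<sigma>"
    using r by auto
  from dualc_scaleR[OF this, of "real k"] k_pos
  have "real k *\<^sub>R rvec e + rvec a \<in> dualc \<sigma>"
    by (simp add: scaleR_add_right)
  moreover have "rvec (a + of_nat k *s e) = real k *\<^sub>R rvec e + rvec a"
    by (simp add: rvec_def vec_eq_iff)
  ultimately show ?thesis
    unfolding sgrp_def by (metis mem_Collect_eq)
qed

definition semigroup_ideal :: "(real^'n) set \<Rightarrow> (int^'n) set \<Rightarrow> bool" where
  "semigroup_ideal \<sigma> U \<longleftrightarrow> U \<subseteq> sgrp \<sigma> \<and> (\<forall>u\<in>U. \<forall>s\<in>sgrp \<sigma>. u + s \<in> U)"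

definition monomial_span :: "(int^'n) set \<Rightarrow> 'n gring set" where
  "monomial_span U = {p. Poly_Mapping.keys p \<subseteq> U}"

lemma single_in_monomial_span_iff:
  "Poly_Mapping.single a c \<in> monomial_span U \<longleftrightarrow> c = 0 \<or> a \<in> U"
  by (simp add: monomial_span_def)

lemma monomial_span_eq_zero_iff: "monomial_span U = {0} \<longleftrightarrow> U = {}"
proof
  assume "monomial_span U = {0}"
  moreover have "Poly_Mapping.single a (1::complex) \<noteq> 0" for a :: "int^'n"
    using lookup_single_eq[of a "1::complex"] by (auto simp del: lookup_single_eq)
  ultimately show "U = {}"
    using single_in_monomial_span_iff[of _ 1 U] by auto
qed (auto simp: monomial_span_def)

lemma poly_mapping_sum_singles:
  "p = (\<Sum>k\<in>Poly_Mapping.keys p. Poly_Mapping.single k (Poly_Mapping.lookup p k))"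
  by (rule poly_mapping_eqI) (simp add: lookup_sum lookup_single when_def in_keys_iff)

lemma is_ideal_monomial_span:
  assumes U: "semigroup_ideal \<sigma> U"
  shows "is_ideal \<sigma> (monomial_span U)"
proof -
  have mult: "r * x \<in> monomial_span U" if "r \<in> Rng \<sigma>" "x \<in> monomial_span U" for r x
  proof -
    have "z \<in> U" if "z \<in> Poly_Mapping.keys (r * x)" for z
    proof -
      obtain a b where "z = a + b" "a \<in> Poly_Mapping.keys r" "b \<in> Poly_Mapping.keys x"
        using \<open>z \<in> Poly_Mapping.keys (r * x)\<close> keys_mult by blast
      then show ?thesis
        using U \<open>r \<in> Rng \<sigma>\<close> \<open>x \<in> monomial_span U\<close>
        unfolding semigroup_ideal_def Rng_def monomial_span_def by (metis add.commute mem_Collect_eq subsetD)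
    qed
    then show ?thesis
      by (auto simp: monomial_span_def)
  qed
  have "x + y \<in> monomial_span U" "x - y \<in> monomial_span U"
    if "x \<in> monomial_span U" "y \<in> monomial_span U" for x y
    using that keys_add[of x y] keys_diff[of x y] by (auto simp: monomial_span_def)
  moreover have "monomial_span U \<subseteq> Rng \<sigma>"
    using U by (auto simp: semigroup_ideal_def monomial_span_def Rng_def)
  ultimately show ?thesis
    using mult by (auto simp: is_ideal_def monomial_span_def)
qed

lemma monomial_span_subset_ideal:
  assumes J: "is_ideal \<sigma> J" and single: "\<And>k c. k \<in> U \<Longrightarrow> Poly_Mapping.single k c \<in> J"
  shows "monomial_span U \<subseteq> J"
proof
  fix p assume p: "p \<in> monomial_span U"
  have "(\<Sum>k\<in>K. Poly_Mapping.single k (Poly_Mapping.lookup p k)) \<in> J" if "finite K" "K \<subseteq> U" for K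
    using that
  proof (induction K rule: finite_induct)
    case empty
    then show ?case using J by (simp add: is_ideal_def)
  next
    case (insert x F)
    then show ?case using J single unfolding is_ideal_def by simp
  qed
  then show "p \<in> J"
    using p by (metis poly_mapping_sum_singles finite_keys monomial_span_def mem_Collect_eq)
qed

lemma monomial_ideal_eq_monomial_span:
  assumes "monomial_ideal \<sigma> I"
  obtains U where "semigroup_ideal \<sigma> U" and "I = monomial_span U"
proof -
  obtain A where A: "A \<subseteq> sgrp \<sigma>" "I = gen_ideal \<sigma> (xmon ` A)"
    using assms unfolding monomial_ideal_def by blast
  define U where "U = {a + s | a s. a \<in> A \<and> s \<in> sgrp \<sigma>}"
  have U: "semigroup_ideal \<sigma> U"
    unfolding semigroup_ideal_def U_def
    using A(1) by (auto intro!: sgrp_add simp: add.assoc) (metis add.assoc sgrp_add)+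
  have "gen_ideal \<sigma> (xmon ` A) \<subseteq> monomial_span U"
  proof -
    have "xmon ` A \<subseteq> monomial_span U"
      using sgrp_zero by (force simp: xmon_def U_def monomial_span_def)
    then show ?thesis
      unfolding gen_ideal_def using is_ideal_monomial_span[OF U] by blast
  qed
  moreover have "monomial_span U \<subseteq> J" if J: "is_ideal \<sigma> J" "xmon ` A \<subseteq> J" for J
  proof (rule monomial_span_subset_ideal[OF J(1)])
    fix k c assume "k \<in> U"
    then obtain a s where as: "k = a + s" "a \<in> A" "s \<in> sgrp \<sigma>"
      unfolding U_def by blast
    have "Poly_Mapping.single s c * xmon a \<in> J"
      using J as unfolding is_ideal_def by (auto simp: Rng_def)
    then show "Poly_Mapping.single k c \<in> J"
      by (simp add: xmon_def mult_single as add.commute)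
  qed
  then have "monomial_span U \<subseteq> gen_ideal \<sigma> (xmon ` A)"
    unfolding gen_ideal_def by blast
  ultimately show ?thesis
    using that U A(2) by blast
qed

definition eval_at :: "'n cpoly \<Rightarrow> int^'n \<Rightarrow> complex" where
  "eval_at f a = peval f (\<lambda>i. of_int (a $ i))"

lemma delta_single: "delta d f (Poly_Mapping.single b c) = Poly_Mapping.single (b + d) (c * eval_at f b)"
  by (cases "c = 0") (simp_all add: delta_def eval_at_def)

lemma lookup_delta:
  "Poly_Mapping.lookup (delta d f p) a = Poly_Mapping.lookup p (a - d) * eval_at f (a - d)"
proof -
  have "Poly_Mapping.lookup (delta d f p) a = (\<Sum>b\<in>Poly_Mapping.keys p.
      if b = a - d then Poly_Mapping.lookup p b * eval_at f b else 0)"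
    unfolding delta_def lookup_sum eval_at_def
    by (intro sum.cong) (auto simp: lookup_single when_def)
  then show ?thesis
    by (simp add: in_keys_iff)
qed

lemma delta_onto_monomial_span_step_down:
  assumes onto: "monomial_span V \<subseteq> delta d f ` monomial_span V" and b: "b \<in> V"
  shows "b - d \<in> V" and "eval_at f (b - d) \<noteq> 0"
proof -
  have "xmon b \<in> monomial_span V"
    using b by (simp add: xmon_def single_in_monomial_span_iff)
  then obtain p where p: "p \<in> monomial_span V" "delta d f p = xmon b"
    using onto by (metis imageE subsetD)
  have "Poly_Mapping.lookup p (b - d) * eval_at f (b - d) = 1"
    using arg_cong[OF p(2), of "\<lambda>q. Poly_Mapping.lookup q b"]
    by (simp add: lookup_delta xmon_def)
  then have "Poly_Mapping.lookup p (b - d) \<noteq> 0" "eval_at f (b - d) \<noteq> 0"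
    by auto
  moreover have "Poly_Mapping.keys p \<subseteq> V"
    using p(1) by (simp add: monomial_span_def)
  ultimately show "b - d \<in> V" "eval_at f (b - d) \<noteq> 0"
    by (auto simp: in_keys_iff)
qed

lemma delta_into_monomial_span_step_up:
  assumes into: "delta d f ` monomial_span U \<subseteq> monomial_span U"
    and "b \<in> U" and "eval_at f b \<noteq> 0"
  shows "b + d \<in> U"
proof -
  have "delta d f (Poly_Mapping.single b 1) \<in> monomial_span U"
    using into assms(2) by (force simp: single_in_monomial_span_iff)
  then show ?thesis
    using assms(3) by (simp add: delta_single single_in_monomial_span_iff)
qed

lemma delta_onto_monomial_span_ray_down:
  assumes onto: "monomial_span V \<subseteq> delta d f ` monomial_span V" and a: "a \<in> V"
  shows "a - of_nat k *s d \<in> V \<and> (\<forall>j. 1 \<le> j \<and> j \<le> k \<longrightarrow> eval_at f (a - of_nat j *s d) \<noteq> 0)"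
proof (induction k)
  case 0
  then show ?case using a by simp
next
  case (Suc k)
  have shift: "a - of_nat (Suc k) *s d = (a - of_nat k *s d) - d"
    by (simp add: vec_eq_iff algebra_simps)
  have "a - of_nat k *s d \<in> V"
    using Suc by simp
  then have "a - of_nat (Suc k) *s d \<in> V" "eval_at f (a - of_nat (Suc k) *s d) \<noteq> 0"
    unfolding shift by (rule delta_onto_monomial_span_step_down[OF onto])+
  then show ?case
    using Suc by (auto simp: le_Suc_eq)
qed

lemma delta_into_monomial_span_ray_up:
  assumes into: "delta d f ` monomial_span U \<subseteq> monomial_span U"
    and "b \<in> U" and "\<And>j. j < k \<Longrightarrow> eval_at f (b + of_nat j *s d) \<noteq> 0"
  shows "b + of_nat k *s d \<in> U"
  using assms(3)
proof (induction k)
  case 0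
  then show ?case using assms(2) by simp
next
  case (Suc k)
  have "b + of_nat k *s d \<in> U"
    using Suc.IH Suc.prems by simp
  moreover have "eval_at f (b + of_nat k *s d) \<noteq> 0"
    using Suc.prems by simp
  ultimately have "(b + of_nat k *s d) + d \<in> U"
    by (rule delta_into_monomial_span_step_up[OF into])
  moreover have "(b + of_nat k *s d) + d = b + of_nat (Suc k) *s d"
    by (simp add: vec_eq_iff distrib_right)
  ultimately show ?case
    by (simp only:)
qed

lemma delta_fixed_monomial_span_subset:
  assumes interior: "rvec (-d) \<in> interior (dualc \<sigma>)"
    and U: "semigroup_ideal \<sigma> U" "U \<noteq> {}" and fixed_U: "delta d f ` monomial_span U = monomial_span U"
    and fixed_V: "delta d f ` monomial_span V = monomial_span V"
  shows "V \<subseteq> U"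
proof
  fix a assume a: "a \<in> V"
  obtain c where c: "c \<in> U"
    using U(2) by blast
  obtain k :: nat where "(a - c) + of_nat k *s (-d) \<in> sgrp \<sigma>"
    using sgrp_add_multiple_of_interior[OF interior] by blast
  then have "c + ((a - c) + of_nat k *s (-d)) \<in> U"
    using U(1) c unfolding semigroup_ideal_def by blast
  moreover have "c + ((a - c) + of_nat k *s (-d)) = a - of_nat k *s d"
    by (simp add: vec_eq_iff algebra_simps)
  ultimately have start: "a - of_nat k *s d \<in> U"
    by simp
  have ray: "\<forall>i. 1 \<le> i \<and> i \<le> k \<longrightarrow> eval_at f (a - of_nat i *s d) \<noteq> 0"
    using delta_onto_monomial_span_ray_down[of V d f a k] fixed_V a by simp
  have "eval_at f ((a - of_nat k *s d) + of_nat j *s d) \<noteq> 0" if "j < k" for j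
  proof -
    have "(a - of_nat k *s d) + of_nat j *s d = a - of_nat (k - j) *s d"
      using that by (simp add: vec_eq_iff algebra_simps of_nat_diff)
    moreover have "1 \<le> k - j" "k - j \<le> k"
      using that by simp_all
    ultimately show ?thesis
      using ray by (simp only:) blast
  qed
  then have "(a - of_nat k *s d) + of_nat k *s d \<in> U"
    using delta_into_monomial_span_ray_up[OF _ start] fixed_U by blast
  then show "a \<in> U"
    by simp
qed

theorem mainTheorem11:
  fixes \<sigma> :: "(real^'n) set" and d :: "int^'n" and f :: "'n cpoly"
  assumes "rat_poly_cone \<sigma>" and "interior \<sigma> \<noteq> {}" and "strongly_convex \<sigma>"
    and "Hd \<sigma> d dvd f"
    and "rvec (-d) \<in> interior (dualc \<sigma>)"
  shows "\<forall>I J. monomial_ideal \<sigma> I \<and> I \<noteq> {0} \<and> delta d f ` I = I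
           \<and> monomial_ideal \<sigma> J \<and> J \<noteq> {0} \<and> delta d f ` J = J \<longrightarrow> I = J"
proof (intro allI impI, elim conjE)
  fix I J
  assume I: "monomial_ideal \<sigma> I" "I \<noteq> {0}" "delta d f ` I = I"
    and J: "monomial_ideal \<sigma> J" "J \<noteq> {0}" "delta d f ` J = J"
  obtain U where U: "semigroup_ideal \<sigma> U" "I = monomial_span U"
    using monomial_ideal_eq_monomial_span[OF I(1)] by blast
  obtain V where V: "semigroup_ideal \<sigma> V" "J = monomial_span V"
    using monomial_ideal_eq_monomial_span[OF J(1)] by blast
  have "U \<noteq> {}" "V \<noteq> {}"
    using I(2) J(2) U(2) V(2) monomial_span_eq_zero_iff by blast+
  then have "V \<subseteq> U" "U \<subseteq> V"
    using delta_fixed_monomial_span_subset[OF assms(5)] U V I(3) J(3) by blast+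
  then show "I = J"
    using U(2) V(2) by simp
qed

end
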